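(* Let $\mathbf{v}(x)\in\mathbb{R}^K$, $x$ ranging over a finite index set, with $\mathbf{v}(x)\ne\mathbf{0}$ for all $x$, let $\lambda_F\ge0$, and let $\mathbf{S}^{(k)}$ be a real invertible $K\times K$ matrix. Define, for invertible $K\times K$ matrices $\mathbf{S}$, $$R_F^{(k)}(\mathbf{S})=\sum_x\frac{0.5}{\|\mathbf{S}^{(k)}\mathbf{v}(x)\|_2}\|\mathbf{S}\mathbf{v}(x)\|_2^2-\tfrac12\log\det(\mathbf{S}\mathbf{S}^T)+\tfrac{\lambda_F}{2}\|\mathbf{S}\|_F^2,$$ and $\mathbf{A}_k=\sum_x\frac{1}{\|\mathbf{S}^{(k)}\mathbf{v}(x)\|_2}\mathbf{v}(x)\mathbf{v}(x)^T$ with eigendecomposition $\mathbf{A}_k=\mathbf{U}_k\mathbf{D}_k\mathbf{U}_k^T$ ($\mathbf{U}_k$ orthogonal, $\mathbf{D}_k$ diagonal). Assume $\mathbf{D}_k+\lambda_F\mathbf{I}$ is positive definite. Then the minimum of $R_F^{(k)}$ over $\mathbf{S}$ is attained at $\mathbf{S}^{(k+1)}=(\mathbf{D}_k+\lambda_F\mathbf{I})^{-1/2}\mathbf{U}_k^T$.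
   Context: $\|\cdot\|_F$ denotes the Frobenius norm; $R_F^{(k)}$ is the majorizer used in a majorization–minimization scheme for estimating the structure matrix $\mathbf{S}$ of a multivariate Laplacian prior on multi-order signal derivatives $\mathbf{v}(x)=(\mathbf{L}*g)(x)$. *)

theory Defs
  imports "HOL-Analysis.Analysis"
begin

definition frob_norm :: "real^'n^'m \<Rightarrow> real" where
  "frob_norm M = sqrt (\<Sum>i\<in>UNIV. \<Sum>j\<in>UNIV. (M $ i $ j)^2)"

text \<open>Majorizer R_F^(k)(S), with X the finite index set of x, Sk = S^(k).\<close>
definition RF :: "'x set \<Rightarrow> ('x \<Rightarrow> real^'K) \<Rightarrow> real \<Rightarrow> real^'K^'K \<Rightarrow> real^'K^'K \<Rightarrow> real" where
  "RF X v lam Sk S =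
     (\<Sum>x\<in>X. (0.5 / norm (Sk *v v x)) * (norm (S *v v x))^2)
     - 1/2 * ln (det (S ** transpose S))
     + lam / 2 * (frob_norm S)^2"

definition Amat :: "'x set \<Rightarrow> ('x \<Rightarrow> real^'K) \<Rightarrow> real^'K^'K \<Rightarrow> real^'K^'K" where
  "Amat X v Sk = (\<Sum>x\<in>X. (1 / norm (Sk *v v x)) *\<^sub>R (\<chi> i j. v x $ i * v x $ j))"

definition diagonal_mat :: "real^'n^'n \<Rightarrow> bool" where
  "diagonal_mat D \<longleftrightarrow> (\<forall>i j. i \<noteq> j \<longrightarrow> D $ i $ j = 0)"

definition orthogonal_mat :: "real^'n^'n \<Rightarrow> bool" where
  "orthogonal_mat U \<longleftrightarrow> transpose U ** U = mat 1 \<and> U ** transpose U = mat 1"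

definition pos_def :: "real^'n^'n \<Rightarrow> bool" where
  "pos_def M \<longleftrightarrow> (\<forall>y. y \<noteq> 0 \<longrightarrow> y \<bullet> (M *v y) > 0)"

text \<open>Power -1/2 of a (positive definite) diagonal matrix, taken entrywise on the diagonal.\<close>
definition diag_inv_sqrt :: "real^'n^'n \<Rightarrow> real^'n^'n" where
  "diag_inv_sqrt D = (\<chi> i j. if i = j then 1 / sqrt (D $ i $ i) else 0)"

end

theory Submission
  imports Defs
begin

text \<open>
  Factor \<open>A\<^sub>k + \<lambda>\<^sub>F I = P P\<^sup>T\<close> with \<open>P = U\<^sub>k (D\<^sub>k + \<lambda>\<^sub>F I)\<^sup>1\<^sup>/\<^sup>2\<close>.
  In the variable \<open>N = S P\<close> the majorizer becomes half of \<open>tr (N N\<^sup>T) - ln det (N N\<^sup>T)\<close>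
  plus a constant. Hadamard's inequality bounds \<open>det (N N\<^sup>T)\<close> by the product of the squared
  row norms of \<open>N\<close>, and \<open>ln t \<le> t - 1\<close> applied to each of them gives
  \<open>tr (N N\<^sup>T) - ln det (N N\<^sup>T) \<ge> K\<close>, with equality at \<open>N = I\<close>, i.e. at
  \<open>S = P\<^sup>-\<^sup>1 = (D\<^sub>k + \<lambda>\<^sub>F I)\<^sup>-\<^sup>1\<^sup>/\<^sup>2 U\<^sub>k\<^sup>T\<close>.
\<close>

lemma projection_residual:
  fixes b :: "'i \<Rightarrow> 'a::real_inner" and r :: 'a
  assumes "finite I" and orth: "\<And>i j. i \<in> I \<Longrightarrow> j \<in> I \<Longrightarrow> i \<noteq> j \<Longrightarrow> b i \<bullet> b j = 0"
  defines "p \<equiv> \<Sum>i\<in>I. (r \<bullet> b i / (b i \<bullet> b i)) *\<^sub>R b i"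
  shows projection_residual_orthogonal: "\<And>j. j \<in> I \<Longrightarrow> (r - p) \<bullet> b j = 0"
    and projection_residual_le: "(r - p) \<bullet> (r - p) \<le> r \<bullet> r"
proof -
  show "(r - p) \<bullet> b j = 0" if "j \<in> I" for j
  proof -
    have "p \<bullet> b j = (\<Sum>i\<in>I. (r \<bullet> b i / (b i \<bullet> b i)) * (b i \<bullet> b j))"
      by (simp add: p_def inner_sum_left)
    also have "\<dots> = (r \<bullet> b j / (b j \<bullet> b j)) * (b j \<bullet> b j)"
      using orth that \<open>finite I\<close> by (subst sum.remove[of _ j]) (auto intro!: sum.neutral)
    also have "\<dots> = r \<bullet> b j"
      by (cases "b j = 0") auto
    finally show ?thesis
      by (simp add: inner_diff_left)
  qed
  then have "(r - p) \<bullet> p = 0"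
    by (simp add: p_def inner_sum_right)
  moreover have "r \<bullet> r = (r - p) \<bullet> (r - p) + p \<bullet> p + 2 * ((r - p) \<bullet> p)"
    by (simp add: algebra_simps inner_commute)
  ultimately show "(r - p) \<bullet> (r - p) \<le> r \<bullet> r"
    by simp
qed

text \<open>Gram--Schmidt on the rows indexed by \<open>I\<close>; subtracting from a row a combination of the
  other rows does not change the determinant.\<close>

lemma exists_row_orthogonalization:
  fixes A :: "real^'n^'n" and I :: "'n set"
  shows "\<exists>B. det B = det A \<and> (\<forall>i\<in>I. \<forall>j\<in>I. i \<noteq> j \<longrightarrow> B$i \<bullet> B$j = 0)
    \<and> (\<forall>i\<in>I. B$i \<bullet> B$i \<le> A$i \<bullet> A$i) \<and> (\<forall>i. i \<notin> I \<longrightarrow> B$i = A$i)"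
  using finite[of I]
proof (induction I rule: finite_induct)
  case empty
  show ?case by blast
next
  case (insert a I)
  obtain B where det_B: "det B = det A" and orth_B: "\<forall>i\<in>I. \<forall>j\<in>I. i \<noteq> j \<longrightarrow> B$i \<bullet> B$j = 0"
    and le_B: "\<forall>i\<in>I. B$i \<bullet> B$i \<le> A$i \<bullet> A$i" and same_B: "\<forall>i. i \<notin> I \<longrightarrow> B$i = A$i"
    using insert.IH by auto
  define p where "p = (\<Sum>i\<in>I. (B$a \<bullet> B$i / (B$i \<bullet> B$i)) *\<^sub>R B$i)"
  define C where "C = (\<chi> k. if k = a then row a B + - p else row k B)"
  have C_a: "C$a = B$a - p" and C_other: "\<And>k. k \<noteq> a \<Longrightarrow> C$k = B$k"
    by (simp_all add: C_def row_def)
  have C_I: "C$k = B$k" if "k \<in> I" for k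
    using insert.hyps(2) that by (intro C_other) auto
  have "- p \<in> vec.span {row j B |j. j \<noteq> a}"
    unfolding p_def
  proof (intro vec.span_neg vec.span_sum)
    fix i assume "i \<in> I"
    then have "B$i \<in> {row j B |j. j \<noteq> a}"
      using insert.hyps(2) by (auto simp: row_def)
    then show "(B$a \<bullet> B$i / (B$i \<bullet> B$i)) *\<^sub>R B$i \<in> vec.span {row j B |j. j \<noteq> a}"
      unfolding scalar_mult_eq_scaleR[symmetric] by (intro vec.span_scale vec.span_base)
  qed
  then have det_C: "det C = det A"
    unfolding C_def det_B[symmetric] by (rule det_row_span)
  have orth_Ca: "C$a \<bullet> C$j = 0" if "j \<in> I" for j
    unfolding C_a C_I[OF that] p_def using insert.hyps(1) orth_B that
    by (simp add: projection_residual_orthogonal)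
  have "C$a \<bullet> C$a \<le> B$a \<bullet> B$a"
    unfolding C_a p_def using insert.hyps(1) orth_B by (intro projection_residual_le) auto
  then have le_Ca: "C$a \<bullet> C$a \<le> A$a \<bullet> A$a"
    using same_B insert.hyps(2) by simp
  show ?case
  proof (intro exI[of _ C] conjI ballI allI impI)
    show "det C = det A" by (fact det_C)
  next
    fix i j assume "i \<in> insert a I" "j \<in> insert a I" "i \<noteq> j"
    then consider "i = a" "j \<in> I" | "j = a" "i \<in> I" | "i \<in> I" "j \<in> I" "i \<noteq> j"
      by auto
    then show "C$i \<bullet> C$j = 0"
    proof cases
      case 1
      then show ?thesis by (simp add: orth_Ca)
    next
      case 2
      then show ?thesis by (simp add: orth_Ca inner_commute)
    next
      case 3
      then show ?thesis
        using orth_B by (simp add: C_I)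
    qed
  next
    fix i assume "i \<in> insert a I"
    then show "C$i \<bullet> C$i \<le> A$i \<bullet> A$i"
      using le_B le_Ca C_I by auto
  next
    fix i assume "i \<notin> insert a I"
    then show "C$i = A$i"
      using same_B C_other by simp
  qed
qed

lemma hadamard_inequality:
  fixes A :: "real^'n^'n"
  shows "(det A)\<^sup>2 \<le> (\<Prod>i\<in>UNIV. A$i \<bullet> A$i)"
proof -
  obtain B :: "real^'n^'n" where det_B: "det B = det A"
    and orth_B: "\<forall>i j. i \<noteq> j \<longrightarrow> B$i \<bullet> B$j = 0" and le_B: "\<forall>i. B$i \<bullet> B$i \<le> A$i \<bullet> A$i"
    using exists_row_orthogonalization[of A UNIV] by auto
  have "B ** transpose B = (\<chi> i j. B$i \<bullet> B$j)"
    by (simp add: matrix_mult_transpose_dot_row row_def)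
  then have "det (B ** transpose B) = (\<Prod>i\<in>UNIV. B$i \<bullet> B$i)"
    using orth_B by (simp add: det_diagonal)
  then have "(det A)\<^sup>2 = (\<Prod>i\<in>UNIV. B$i \<bullet> B$i)"
    by (simp add: det_B[symmetric] det_mul power2_eq_square)
  also have "\<dots> \<le> (\<Prod>i\<in>UNIV. A$i \<bullet> A$i)"
    using le_B by (intro prod_mono) auto
  finally show ?thesis .
qed

lemma ln_det_gram_le_trace:
  fixes N :: "real^'n^'n"
  assumes "det N \<noteq> 0"
  shows "ln (det (N ** transpose N)) \<le> trace (N ** transpose N) - real CARD('n)"
proof -
  have hadamard: "(det N)\<^sup>2 \<le> (\<Prod>i\<in>UNIV. N$i \<bullet> N$i)"
    by (rule hadamard_inequality)
  have row_pos: "N$i \<bullet> N$i > 0" for i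
  proof (rule ccontr)
    assume "\<not> N$i \<bullet> N$i > 0"
    then have "(\<Prod>i\<in>UNIV. N$i \<bullet> N$i) = 0"
      by (intro prod_zero[of UNIV]) auto
    moreover have "(det N)\<^sup>2 > 0"
      using assms by simp
    ultimately show False
      using hadamard by linarith
  qed
  have "ln (det (N ** transpose N)) = ln ((det N)\<^sup>2)"
    by (simp add: det_mul power2_eq_square)
  also have "\<dots> \<le> ln (\<Prod>i\<in>UNIV. N$i \<bullet> N$i)"
    using hadamard assms by (simp add: ln_mono)
  also have "\<dots> = (\<Sum>i\<in>UNIV. ln (N$i \<bullet> N$i))"
    using row_pos by (simp add: ln_prod less_imp_neq[symmetric])
  also have "\<dots> \<le> (\<Sum>i\<in>UNIV. N$i \<bullet> N$i - 1)"
    using row_pos by (intro sum_mono ln_le_minus_one)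
  also have "\<dots> = trace (N ** transpose N) - real CARD('n)"
    by (simp add: matrix_mult_transpose_dot_row row_def trace_def sum_subtractf)
  finally show ?thesis .
qed

lemma det_gram_pos:
  fixes T :: "real^'n^'n"
  assumes "det T \<noteq> 0"
  shows "0 < det (T ** transpose T)"
  using assms by (auto simp: det_mul zero_less_mult_iff linorder_neq_iff)

lemma trace_minus_ln_det_minimal:
  fixes P Q S :: "real^'n^'n"
  assumes "Q ** P = mat 1" and "det S \<noteq> 0"
  shows "trace ((P ** transpose P) ** (transpose Q ** Q)) - ln (det (Q ** transpose Q))
    \<le> trace ((P ** transpose P) ** (transpose S ** S)) - ln (det (S ** transpose S))"
proof -
  have "det Q * det P = 1"
    using assms(1) by (metis det_I det_mul)
  then have "det Q \<noteq> 0" and "det P \<noteq> 0"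
    by auto
  have det_PPt: "det (P ** transpose P) > 0"
    using \<open>det P \<noteq> 0\<close> by (rule det_gram_pos)
  have change_of_variable: "trace ((P ** transpose P) ** (transpose T ** T)) - ln (det (T ** transpose T))
      = trace ((T ** P) ** transpose (T ** P)) - ln (det ((T ** P) ** transpose (T ** P)))
        + ln (det (P ** transpose P))" if "det T \<noteq> 0" for T :: "real^'n^'n"
  proof -
    have "trace ((P ** transpose P) ** (transpose T ** T)) = trace ((T ** P) ** transpose (T ** P))"
      by (metis matrix_mul_assoc matrix_transpose_mul trace_mul_sym)
    moreover have "det ((T ** P) ** transpose (T ** P)) = det (T ** transpose T) * det (P ** transpose P)"
      by (simp add: det_mul matrix_transpose_mul)
    ultimately show ?thesis
      using det_PPt det_gram_pos[OF that] by (simp add: ln_mult)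
  qed
  have "det (S ** P) \<noteq> 0"
    using assms(2) \<open>det P \<noteq> 0\<close> by (simp add: det_mul)
  then have "real CARD('n) \<le> trace ((S ** P) ** transpose (S ** P))
      - ln (det ((S ** P) ** transpose (S ** P)))"
    using ln_det_gram_le_trace by fastforce
  then show ?thesis
    using change_of_variable[OF \<open>det Q \<noteq> 0\<close>] change_of_variable[OF assms(2)] assms(1)
    by (simp add: trace_I)
qed

lemma matrix_add_rdistrib: "(A + B) ** C = A ** C + B ** C"
  by (vector matrix_matrix_mult_def sum.distrib[symmetric] field_simps)

lemma trace_sum_scaleR_mult:
  fixes Y :: "'x \<Rightarrow> real^'n^'n"
  shows "trace ((\<Sum>x\<in>X. c x *\<^sub>R Y x) ** G) = (\<Sum>x\<in>X. c x * trace (Y x ** G))"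
  by (simp add: trace_def matrix_matrix_mult_def sum_distrib_left sum_distrib_right
      mult.assoc sum.swap[of _ X])

lemma norm_matrix_vector_mult_squared_eq_trace:
  fixes S :: "real^'n^'m" and y :: "real^'n"
  shows "(norm (S *v y))\<^sup>2 = trace ((\<chi> i j. y$i * y$j) ** (transpose S ** S))"
proof -
  have "(norm (S *v y))\<^sup>2 = (\<Sum>k\<in>UNIV. \<Sum>i\<in>UNIV. \<Sum>j\<in>UNIV. y$i * y$j * (S$k$j * S$k$i))"
    by (simp add: power2_norm_eq_inner inner_vec_def matrix_vector_mult_def
        sum_distrib_left sum_distrib_right mult_ac)
  also have "\<dots> = (\<Sum>i\<in>UNIV. \<Sum>j\<in>UNIV. \<Sum>k\<in>UNIV. y$i * y$j * (S$k$j * S$k$i))"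
    by (subst sum.swap, rule sum.cong[OF refl], rule sum.swap)
  also have "\<dots> = trace ((\<chi> i j. y$i * y$j) ** (transpose S ** S))"
    by (simp add: trace_def matrix_matrix_mult_def transpose_def sum_distrib_left)
  finally show ?thesis .
qed

lemma frob_norm_squared_eq_trace: "(frob_norm S)\<^sup>2 = trace (transpose S ** S)"
proof -
  have "(frob_norm S)\<^sup>2 = (\<Sum>i\<in>UNIV. \<Sum>j\<in>UNIV. (S$i$j)\<^sup>2)"
    unfolding frob_norm_def by (simp add: sum_nonneg)
  also have "\<dots> = trace (S ** transpose S)"
    by (simp add: trace_def matrix_matrix_mult_def transpose_def power2_eq_square)
  finally show ?thesis
    by (metis trace_mul_sym)
qed

lemma RF_eq_trace:
  "RF X v lam Sk S = 1/2 * (trace ((Amat X v Sk + lam *\<^sub>R mat 1) ** (transpose S ** S))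
    - ln (det (S ** transpose S)))"
proof -
  have "(\<Sum>x\<in>X. (0.5 / norm (Sk *v v x)) * (norm (S *v v x))\<^sup>2)
      = 1/2 * trace (Amat X v Sk ** (transpose S ** S))"
    by (simp add: Amat_def trace_sum_scaleR_mult norm_matrix_vector_mult_squared_eq_trace
        sum_distrib_left)
  moreover have "trace ((Amat X v Sk + lam *\<^sub>R mat 1) ** (transpose S ** S))
      = trace (Amat X v Sk ** (transpose S ** S)) + lam * trace (transpose S ** S)"
    by (simp add: matrix_add_rdistrib trace_add scalar_matrix_assoc[symmetric] trace_def
        sum.distrib sum_distrib_left)
  ultimately show ?thesis
    by (simp add: RF_def frob_norm_squared_eq_trace algebra_simps)
qed

definition diag_matrix :: "('n \<Rightarrow> 'a::zero) \<Rightarrow> 'a^'n^'n" where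
  "diag_matrix d = (\<chi> i j. if i = j then d i else 0)"

lemma diag_matrix_mult:
  "diag_matrix a ** diag_matrix b = diag_matrix (\<lambda>i. a i * b i :: 'a::semiring_1)"
proof -
  have "(\<Sum>k\<in>UNIV. (if i = k then a i else 0) * (if k = j then b k else 0))
      = (\<Sum>k\<in>UNIV. if k = i then a i * (if i = j then b i else 0) else 0)" for i j
    by (rule sum.cong) auto
  then show ?thesis
    by (simp add: diag_matrix_def matrix_matrix_mult_def vec_eq_iff)
qed

lemma transpose_diag_matrix: "transpose (diag_matrix d) = diag_matrix d"
  by (simp add: diag_matrix_def transpose_def vec_eq_iff)

lemma mat_eq_diag_matrix: "mat k = diag_matrix (\<lambda>_. k)"
  by (simp add: mat_def diag_matrix_def)

lemma diagonal_mat_eq_diag_matrix: "diagonal_mat D \<Longrightarrow> D = diag_matrix (\<lambda>i. D$i$i)"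
  by (simp add: diagonal_mat_def diag_matrix_def vec_eq_iff)

lemma diagonal_mat_add_mat: "diagonal_mat D \<Longrightarrow> diagonal_mat (D + c *\<^sub>R mat 1)"
  by (simp add: diagonal_mat_def mat_def)

lemma diag_sqrt_mult_transpose:
  assumes "diagonal_mat E" and "\<And>i. 0 \<le> E$i$i"
  shows "diag_matrix (\<lambda>i. sqrt (E$i$i)) ** transpose (diag_matrix (\<lambda>i. sqrt (E$i$i))) = E"
  using assms by (subst (3) diagonal_mat_eq_diag_matrix[OF assms(1)])
    (simp add: transpose_diag_matrix diag_matrix_mult)

lemma diag_inv_sqrt_mult_diag_sqrt:
  assumes "\<And>i. 0 < E$i$i"
  shows "diag_inv_sqrt E ** diag_matrix (\<lambda>i. sqrt (E$i$i)) = mat 1"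
  using assms by (simp add: diag_inv_sqrt_def diag_matrix_def[symmetric] diag_matrix_mult
      mat_eq_diag_matrix less_imp_neq[symmetric])

lemma pos_def_diagonal_pos: "pos_def M \<Longrightarrow> 0 < M$i$i"
  unfolding pos_def_def
  by (metis axis_eq_0_iff cart_eq_inner_axis inner_commute matrix_vector_mul_component zero_neq_one)

theorem proposition2:
  fixes X :: "'x set" and v :: "'x \<Rightarrow> real^'K" and lam :: real
    and Sk U D :: "real^'K^'K"
  assumes "finite X"
    and "\<forall>x\<in>X. v x \<noteq> 0"
    and "lam \<ge> 0"
    and "invertible Sk"
    and "orthogonal_mat U" and "diagonal_mat D"
    and "Amat X v Sk = U ** D ** transpose U"
    and "pos_def (D + lam *\<^sub>R mat 1)"
  shows "invertible (diag_inv_sqrt (D + lam *\<^sub>R mat 1) ** transpose U)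
    \<and> (\<forall>S. invertible S \<longrightarrow>
          RF X v lam Sk (diag_inv_sqrt (D + lam *\<^sub>R mat 1) ** transpose U) \<le> RF X v lam Sk S)"
proof -
  \<comment> \<open>Only the factorization of \<open>Amat\<close> and the positive definiteness of \<open>D + lam I\<close> enter.\<close>
  define E where "E = D + lam *\<^sub>R mat 1"
  define R where "R = diag_matrix (\<lambda>i. sqrt (E$i$i))"
  define P where "P = U ** R"
  define S\<^sub>0 where "S\<^sub>0 = diag_inv_sqrt E ** transpose U"
  have E_pos: "0 < E$i$i" for i
    using assms(8) unfolding E_def by (rule pos_def_diagonal_pos)
  have "diagonal_mat E"
    unfolding E_def using assms(6) by (rule diagonal_mat_add_mat)
  have UtU: "transpose U ** U = mat 1" and UUt: "U ** transpose U = mat 1"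
    using assms(5) by (simp_all add: orthogonal_mat_def)
  have "P ** transpose P = U ** (R ** transpose R) ** transpose U"
    by (simp add: P_def matrix_transpose_mul matrix_mul_assoc)
  also have "\<dots> = Amat X v Sk + lam *\<^sub>R mat 1"
    using diag_sqrt_mult_transpose[OF \<open>diagonal_mat E\<close>] E_pos
    by (simp add: R_def E_def assms(7) UUt less_imp_le matrix_add_ldistrib matrix_add_rdistrib
        matrix_scalar_ac scalar_matrix_assoc[symmetric])
  finally have PPt: "P ** transpose P = Amat X v Sk + lam *\<^sub>R mat 1" .
  have "S\<^sub>0 ** P = diag_inv_sqrt E ** (transpose U ** U) ** R"
    by (simp add: S\<^sub>0_def P_def matrix_mul_assoc)
  then have S\<^sub>0_P: "S\<^sub>0 ** P = mat 1"
    using diag_inv_sqrt_mult_diag_sqrt[OF E_pos] by (simp add: UtU R_def)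
  have "RF X v lam Sk S\<^sub>0 \<le> RF X v lam Sk S" if "invertible S" for S
  proof -
    have "det S \<noteq> 0"
      using that by (simp add: invertible_det_nz)
    from trace_minus_ln_det_minimal[OF S\<^sub>0_P this] show ?thesis
      unfolding RF_eq_trace PPt by (rule mult_left_mono) simp
  qed
  moreover have "invertible S\<^sub>0"
    using S\<^sub>0_P invertible_right_inverse by blast
  ultimately show ?thesis
    by (simp add: S\<^sub>0_def E_def)
qed

end
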